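(* Let $G=(V,E)$ be a connected simple graph which contains a cycle, and suppose that the shortest cycle in $G$ has even length. Then the path metric $\partial$ on $V$ is not conditionally strictly negative definite.
   Context: The path metric $\partial(x,y)$ is the length of a shortest path between vertices $x,y$. A symmetric real function $K$ on $V\times V$ is conditionally strictly negative definite if for every finitely supported $\lambda\colon V\to\mathbb{C}$, $\lambda\neq0$, with $\sum_v\lambda(v)=0$ one has $\sum_{x,y}\lambda(x)\overline{\lambda(y)}K(x,y)<0$. *)

theory Defs
  imports Complex_Main
begin

definition simple_graph :: "'a set \<Rightarrow> ('a \<Rightarrow> 'a \<Rightarrow> bool) \<Rightarrow> bool" where
  "simple_graph V E \<longleftrightarrow> (\<forall>x y. E x y \<longrightarrow> x \<in> V \<and> y \<in> V \<and> x \<noteq> y \<and> E y x)"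

text \<open>A walk is a nonempty list of vertices, consecutive ones adjacent; its length is
  the number of edges, i.e. length minus one.\<close>
definition is_walk :: "'a set \<Rightarrow> ('a \<Rightarrow> 'a \<Rightarrow> bool) \<Rightarrow> 'a list \<Rightarrow> bool" where
  "is_walk V E p \<longleftrightarrow> p \<noteq> [] \<and> set p \<subseteq> V \<and> (\<forall>i. Suc i < length p \<longrightarrow> E (p ! i) (p ! Suc i))"

definition connected_graph :: "'a set \<Rightarrow> ('a \<Rightarrow> 'a \<Rightarrow> bool) \<Rightarrow> bool" where
  "connected_graph V E \<longleftrightarrow> V \<noteq> {} \<and>
     (\<forall>x\<in>V. \<forall>y\<in>V. \<exists>p. is_walk V E p \<and> hd p = x \<and> last p = y)"

definition path_dist :: "'a set \<Rightarrow> ('a \<Rightarrow> 'a \<Rightarrow> bool) \<Rightarrow> 'a \<Rightarrow> 'a \<Rightarrow> nat" where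
  "path_dist V E x y = (LEAST n. \<exists>p. is_walk V E p \<and> hd p = x \<and> last p = y \<and> length p = Suc n)"

definition is_cycle :: "'a set \<Rightarrow> ('a \<Rightarrow> 'a \<Rightarrow> bool) \<Rightarrow> 'a list \<Rightarrow> bool" where
  "is_cycle V E c \<longleftrightarrow> length c \<ge> 3 \<and> distinct c \<and> set c \<subseteq> V \<and>
     (\<forall>i < length c. E (c ! i) (c ! ((Suc i) mod length c)))"

definition has_cycle :: "'a set \<Rightarrow> ('a \<Rightarrow> 'a \<Rightarrow> bool) \<Rightarrow> bool" where
  "has_cycle V E \<longleftrightarrow> (\<exists>c. is_cycle V E c)"

definition girth :: "'a set \<Rightarrow> ('a \<Rightarrow> 'a \<Rightarrow> bool) \<Rightarrow> nat" where
  "girth V E = (LEAST n. \<exists>c. is_cycle V E c \<and> length c = n)"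

text \<open>Conditionally strictly negative definite kernel on V: for every finitely supported
  nonzero \<lambda> : V \<rightarrow> \<complex> with total sum zero, the Hermitian form is strictly negative.
  (The form is real since K is symmetric and real-valued; we compare its real part.)\<close>
definition cond_strict_neg_def :: "'a set \<Rightarrow> ('a \<Rightarrow> 'a \<Rightarrow> real) \<Rightarrow> bool" where
  "cond_strict_neg_def V K \<longleftrightarrow>
     (\<forall>l :: 'a \<Rightarrow> complex. finite {v. l v \<noteq> 0} \<and> {v. l v \<noteq> 0} \<subseteq> V \<and> (\<exists>v. l v \<noteq> 0) \<and>
        (\<Sum>v\<in>{v. l v \<noteq> 0}. l v) = 0 \<longrightarrow>
        Re (\<Sum>x\<in>{v. l v \<noteq> 0}. \<Sum>y\<in>{v. l v \<noteq> 0}. l x * cnj (l y) * complex_of_real (K x y)) < 0)"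

end

theory Submission imports Defs begin

text \<open>Take a shortest cycle \<open>c 0, \<dots>, c (2n - 1)\<close>. Below the girth, shortest paths are unique,
  so opposite vertices of the cycle are at distance exactly \<open>n\<close>. For \<open>a = c 0\<close>, \<open>b = c 1\<close>,
  \<open>u = c n\<close>, \<open>w = c (n + 1)\<close> and the weights \<open>+1\<close> on \<open>a, u\<close>, \<open>-1\<close> on \<open>b, w\<close>, the quadratic form equals
  \<open>2(\<partial>(a,u) + \<partial>(b,w)) - 2(\<partial>(a,b) + \<partial>(b,u) + \<partial>(u,w) + \<partial>(w,a)) \<ge> 2 \<cdot> 2n - 2(1 + (n-1) + 1 + (n-1)) = 0\<close>.\<close>

lemma is_walk_iff_successively:
  "is_walk V E p \<longleftrightarrow> p \<noteq> [] \<and> set p \<subseteq> V \<and> successively E p"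
  unfolding is_walk_def successively_conv_nth by blast

lemma is_cycle_iff_closed_walk:
  "is_cycle V E c \<longleftrightarrow> 3 \<le> length c \<and> distinct c \<and> set c \<subseteq> V \<and> successively E (c @ [hd c])"
proof (cases "c = []")
  case True
  then show ?thesis by (auto simp: is_cycle_def)
next
  case False
  have "(\<forall>i < length c. E (c ! i) (c ! (Suc i mod length c))) \<longleftrightarrow>
        (\<forall>i. Suc i < length (c @ [hd c]) \<longrightarrow> E ((c @ [hd c]) ! i) ((c @ [hd c]) ! Suc i))"
  proof (intro iffI allI impI)
    fix i
    assume H: "\<forall>i < length c. E (c ! i) (c ! (Suc i mod length c))" "Suc i < length (c @ [hd c])"
    then consider "Suc i < length c" | "Suc i = length c" by fastforce
    then show "E ((c @ [hd c]) ! i) ((c @ [hd c]) ! Suc i)"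
      by cases (use H(1)[rule_format, of i] False in \<open>auto simp: nth_append hd_conv_nth\<close>)
  next
    fix i
    assume H: "\<forall>i. Suc i < length (c @ [hd c]) \<longrightarrow> E ((c @ [hd c]) ! i) ((c @ [hd c]) ! Suc i)"
      "i < length c"
    then consider "Suc i < length c" | "Suc i = length c" by fastforce
    then show "E (c ! i) (c ! (Suc i mod length c))"
      by cases (use H(1)[rule_format, of i] False in \<open>auto simp: nth_append hd_conv_nth\<close>)
  qed
  then show ?thesis
    unfolding is_cycle_def successively_conv_nth by blast
qed

lemma successively_rev_if_simple_graph:
  assumes "simple_graph V E" "successively E p"
  shows "successively E (rev p)"
  using successively_mono[OF assms(2)] assms(1) by (simp add: simple_graph_def)

lemma is_cycle_rotate1:
  assumes "is_cycle V E c"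
  shows "is_cycle V E (rotate1 c)"
proof -
  have c: "length c \<ge> 3" "distinct c" "set c \<subseteq> V"
    "\<forall>i < length c. E (c ! i) (c ! (Suc i mod length c))"
    using assms by (auto simp: is_cycle_def)
  have "E (rotate1 c ! i) (rotate1 c ! (Suc i mod length c))" if i: "i < length c" for i
  proof -
    have m: "Suc i mod length c < length c"
      using c(1) by (intro mod_less_divisor) linarith
    then show ?thesis
      using c(4)[rule_format, of "Suc i mod length c"] i by (simp add: nth_rotate1 mod_Suc_eq)
  qed
  then show ?thesis
    using c by (simp add: is_cycle_def)
qed

lemma path_dist_le_walk:
  "is_walk V E p \<Longrightarrow> path_dist V E (hd p) (last p) \<le> length p - 1"
  unfolding path_dist_def by (rule Least_le) (rule exI[of _ p], auto simp: is_walk_def)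

lemma shortest_walk_exists:
  "is_walk V E p \<Longrightarrow> hd p = x \<Longrightarrow> last p = y \<Longrightarrow>
   \<exists>q. is_walk V E q \<and> hd q = x \<and> last q = y \<and> length q = Suc (path_dist V E x y)"
  unfolding path_dist_def
  by (rule LeastI_ex) (rule exI[of _ "length p - 1"], rule exI[of _ p], auto simp: is_walk_def)

lemma path_dist_self: "x \<in> V \<Longrightarrow> path_dist V E x x = 0"
  using path_dist_le_walk[of V E "[x]"] by (simp add: is_walk_iff_successively)

lemma path_dist_sym:
  assumes "simple_graph V E"
  shows "path_dist V E x y = path_dist V E y x"
proof -
  have "is_walk V E (rev p) \<and> hd (rev p) = y \<and> last (rev p) = x \<and> length (rev p) = Suc n"
    if "is_walk V E p" "hd p = x" "last p = y" "length p = Suc n" for x y n p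
    using that successively_rev_if_simple_graph[OF assms]
    by (auto simp: is_walk_iff_successively hd_rev last_rev)
  then have "(\<exists>p. is_walk V E p \<and> hd p = x \<and> last p = y \<and> length p = Suc n) \<longleftrightarrow>
             (\<exists>p. is_walk V E p \<and> hd p = y \<and> last p = x \<and> length p = Suc n)" for n
    by metis
  then show ?thesis
    unfolding path_dist_def by simp
qed

lemma path_dist_nth_le:
  assumes "successively E xs" "set xs \<subseteq> V" "i \<le> j" "j < length xs"
  shows "path_dist V E (xs ! i) (xs ! j) \<le> j - i"
proof -
  define p where "p = take (Suc (j - i)) (drop i xs)"
  have "successively E (drop i xs)"
    using assms(1) successively_append_iff[of E "take i xs" "drop i xs"] by simp
  then have "successively E p"
    unfolding p_def by (metis append_take_drop_id successively_append_iff)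
  moreover have "set p \<subseteq> V"
    using assms(2) unfolding p_def by (meson order_trans set_drop_subset set_take_subset)
  ultimately have walk: "is_walk V E p"
    using assms unfolding p_def by (simp add: is_walk_iff_successively)
  have len: "length p = Suc (j - i)"
    using assms unfolding p_def by simp
  have "hd p = xs ! i" "last p = xs ! j"
    using assms len unfolding p_def by (simp_all add: hd_conv_nth last_conv_nth)
  then show ?thesis
    using path_dist_le_walk[OF walk] len by simp
qed

lemma path_dist_along_cycle:
  assumes "is_cycle V E c" "i \<le> j" "i < length c" "j \<le> length c"
  shows "path_dist V E (c ! i) (c ! (j mod length c)) \<le> j - i"
proof -
  have ne: "c \<noteq> []"
    using assms(1) by (auto simp: is_cycle_def)
  have c: "set (c @ [hd c]) \<subseteq> V" "successively E (c @ [hd c])"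
    using assms(1) hd_in_set[OF ne] by (auto simp: is_cycle_iff_closed_walk)
  have "(c @ [hd c]) ! k = c ! (k mod length c)" if "k \<le> length c" for k
    using that ne by (cases "k = length c") (auto simp: nth_append hd_conv_nth)
  then show ?thesis
    using path_dist_nth_le[OF c(2,1) assms(2)] assms(3,4) by simp
qed

lemma exists_distinct_walk:
  "is_walk V E p \<Longrightarrow>
   \<exists>q. is_walk V E q \<and> distinct q \<and> hd q = hd p \<and> last q = last p \<and> length q \<le> length p"
proof (induction "length p" arbitrary: p rule: less_induct)
  case less
  show ?case
  proof (cases "distinct p")
    case True
    then show ?thesis using less.prems by blast
  next
    case False
    then obtain xs ys zs y where p: "p = xs @ [y] @ ys @ [y] @ zs"
      using not_distinct_decomp by blast
    define p' where "p' = xs @ [y] @ zs"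
    have s: "successively E p" "set p \<subseteq> V"
      using less.prems by (auto simp: is_walk_iff_successively)
    then have "successively E (xs @ [y])" "successively E ([y] @ zs)"
      unfolding p by (metis append_assoc successively_append_iff)+
    then have "successively E p'"
      unfolding p'_def by (auto simp: successively_append_iff)
    moreover have "set p' \<subseteq> V"
      using s(2) p unfolding p'_def by auto
    ultimately have walk: "is_walk V E p'"
      by (simp add: is_walk_iff_successively p'_def)
    have shorter: "length p' < length p"
      using p unfolding p'_def by simp
    have "hd p' = hd p" "last p' = last p"
      unfolding p p'_def by (cases xs; simp)+
    then show ?thesis
      using less.hyps[OF shorter walk] shorter by force
  qed
qed

text \<open>Two different paths with common ends first part at some vertex and first meet again at
  some \<open>z\<close>; the two arcs in between form a cycle no longer than the two paths together.\<close>

lemma short_distinct_walks_unique: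
  assumes sg: "simple_graph V E" and girth: "\<And>c. is_cycle V E c \<Longrightarrow> g \<le> length c"
  shows "is_walk V E P \<Longrightarrow> is_walk V E Q \<Longrightarrow> distinct P \<Longrightarrow> distinct Q \<Longrightarrow> hd P = hd Q
    \<Longrightarrow> last P = last Q \<Longrightarrow> length P + length Q < g + 2 \<Longrightarrow> P = Q"
proof (induction "length P + length Q" arbitrary: P Q rule: less_induct)
  case less
  obtain x P1 where P: "P = x # P1"
    using less.prems(1) by (cases P) (auto simp: is_walk_iff_successively)
  obtain Q1 where Q: "Q = x # Q1"
    using less.prems(2,5) P by (cases Q) (auto simp: is_walk_iff_successively)
  consider "P1 = []" | "Q1 = []" | p P' q Q' where "P1 = p # P'" "Q1 = q # Q'"
    by (meson list.exhaust)
  then show ?case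
  proof cases
    case 1
    then show ?thesis
      using less.prems(4,6) P Q by (cases Q1 rule: rev_cases) auto
  next
    case 2
    then show ?thesis
      using less.prems(3,6) P Q by (cases P1 rule: rev_cases) auto
  next
    case (3 p P' q Q')
    show ?thesis
    proof (cases "p = q")
      case True
      have "P1 = Q1"
      proof (rule less.hyps)
        show "is_walk V E P1" "is_walk V E Q1"
          using less.prems(1,2) P Q 3 by (auto simp: is_walk_iff_successively)
      qed (use less.prems P Q 3 True in auto)
      then show ?thesis
        using P Q by simp
    next
      case False
      have "last P1 \<in> set Q1"
        using less.prems(6) P Q 3 by (metis last_ConsR last_in_set list.distinct(1))
      then obtain ps z ps' where sp: "P1 = ps @ z # ps'" and zQ: "z \<in> set Q1"
          and before_z: "\<forall>v\<in>set ps. v \<notin> set Q1"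
        using split_list_first_prop[of P1 "\<lambda>v. v \<in> set Q1"] 3 by (metis last_in_set list.distinct(1))
      obtain qs qs' where sq: "Q1 = qs @ z # qs'"
        using zQ split_list by metis
      define C where "C = x # ps @ z # rev qs"
      have arcP: "successively E (x # ps @ [z])"
        using less.prems(1) P sp unfolding is_walk_iff_successively
        by (metis append.assoc append_Cons append_Nil successively_append_iff)
      have "successively E (x # qs @ [z])"
        using less.prems(2) Q sq unfolding is_walk_iff_successively
        by (metis append.assoc append_Cons append_Nil successively_append_iff)
      then have arcQ: "successively E (z # rev qs @ [x])"
        using successively_rev_if_simple_graph[OF sg] by fastforce
      have "C @ [hd C] = (x # ps) @ (z # rev qs @ [x])"
        unfolding C_def by simp
      then have "successively E (C @ [hd C])"
        using arcP arcQ successively_append_iff[of E "x # ps" "[z]"]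
          successively_append_iff[of E "x # ps" "z # rev qs @ [x]"] by simp
      moreover have "distinct C" "set C \<subseteq> V"
        using less.prems(1-4) P Q sp sq before_z
        unfolding C_def is_walk_iff_successively by auto
      moreover have "3 \<le> length C"
        using False 3 sp sq unfolding C_def by (cases ps; cases qs) auto
      ultimately have "g \<le> length C"
        by (intro girth) (simp add: is_cycle_iff_closed_walk)
      moreover have "length C + 2 \<le> length P + length Q"
        using P Q sp sq unfolding C_def by simp
      ultimately show ?thesis
        using less.prems(7) by simp
    qed
  qed
qed

lemma shortest_cycle_antipodal_dist:
  assumes sg: "simple_graph V E" and c: "is_cycle V E c"
    and shortest: "\<And>c'. is_cycle V E c' \<Longrightarrow> length c \<le> length c'"
    and len: "length c = 2 * n"
  shows "n \<le> path_dist V E (c ! 0) (c ! n)"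
proof (rule ccontr)
  assume short: "\<not> n \<le> path_dist V E (c ! 0) (c ! n)"
  have c': "3 \<le> length c" "distinct c" "set c \<subseteq> V" "successively E (c @ [hd c])"
    using c by (auto simp: is_cycle_iff_closed_walk)
  define A where "A = take (Suc n) c"
  have "successively E c"
    using c'(4) successively_append_iff[of E c "[hd c]"] by simp
  then have "successively E A"
    unfolding A_def by (metis append_take_drop_id successively_append_iff)
  moreover have "set A \<subseteq> V"
    using c'(3) unfolding A_def by (meson order_trans set_take_subset)
  ultimately have walkA: "is_walk V E A"
    using len c'(1) by (auto simp: is_walk_iff_successively A_def)
  have "c \<noteq> []"
    using c'(1) by (cases c) auto
  then have A: "length A = Suc n" "hd A = c ! 0" "last A = c ! n" "distinct A"
    using len c'(1,2) by (simp_all add: A_def hd_conv_nth last_conv_nth)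
  obtain q where q: "is_walk V E q" "hd q = c ! 0" "last q = c ! n"
      "length q = Suc (path_dist V E (c ! 0) (c ! n))"
    using shortest_walk_exists[OF walkA A(2,3)] by blast
  obtain r where r: "is_walk V E r" "distinct r" "hd r = c ! 0" "last r = c ! n"
      "length r \<le> length q"
    using exists_distinct_walk[OF q(1)] q by auto
  have "r = A"
    by (rule short_distinct_walks_unique[OF sg shortest r(1) walkA r(2) A(4)])
       (use r q A short len in auto)
  then show False
    using r q A short by simp
qed

lemma girth_le_cycle: "is_cycle V E c \<Longrightarrow> girth V E \<le> length c"
  unfolding girth_def by (rule Least_le) blast

lemma shortest_cycle_exists:
  "has_cycle V E \<Longrightarrow> \<exists>c. is_cycle V E c \<and> length c = girth V E"
  unfolding girth_def has_cycle_def by (rule LeastI_ex) blast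

subsection \<open>A four-point obstruction\<close>

lemma not_cond_strict_neg_def_four_points:
  assumes "a \<in> V" "b \<in> V" "u \<in> V" "w \<in> V"
    and "distinct [a, b, u, w]"
    and sym: "\<And>x y. K x y = K y x" and zero: "\<And>x. x \<in> V \<Longrightarrow> K x x = 0"
    and "K a b + K b u + K u w + K w a \<le> K a u + K b w"
  shows "\<not> cond_strict_neg_def V K"
proof
  assume neg: "cond_strict_neg_def V K"
  define l :: "'a \<Rightarrow> complex" where
    "l = (\<lambda>v. if v = a \<or> v = u then 1 else if v = b \<or> v = w then -1 else 0)"
  have supp: "{v. l v \<noteq> 0} = {a, b, u, w}"
    unfolding l_def by auto
  let ?form = "Re (\<Sum>x\<in>{v. l v \<noteq> 0}. \<Sum>y\<in>{v. l v \<noteq> 0}. l x * cnj (l y) * complex_of_real (K x y))"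
  have "finite {v. l v \<noteq> 0} \<and> {v. l v \<noteq> 0} \<subseteq> V \<and> (\<exists>v. l v \<noteq> 0) \<and>
        (\<Sum>v\<in>{v. l v \<noteq> 0}. l v) = 0"
    using assms(1-5) unfolding supp by (auto simp: l_def)
  with neg have "?form < 0"
    unfolding cond_strict_neg_def_def by blast
  moreover have "?form = 2 * (K a u + K b w) - 2 * (K a b + K b u + K u w + K w a)"
    using assms(1-5) zero sym[of b a] sym[of u a] sym[of w a] sym[of u b] sym[of w b] sym[of w u]
    unfolding supp by (auto simp: l_def)
  ultimately show False
    using assms(8) by simp
qed

theorem mainTheorem7:
  fixes V :: "'a set" and E :: "'a \<Rightarrow> 'a \<Rightarrow> bool"
  assumes "simple_graph V E"
    and "connected_graph V E"
    and "has_cycle V E"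
    and "even (girth V E)"
  shows "\<not> cond_strict_neg_def V (\<lambda>x y. real (path_dist V E x y))"
proof -
  obtain c where c: "is_cycle V E c" "length c = girth V E"
    using shortest_cycle_exists[OF assms(3)] by blast
  then have shortest: "\<And>c'. is_cycle V E c' \<Longrightarrow> length c \<le> length c'"
    using girth_le_cycle by metis
  obtain n where len: "length c = 2 * n"
    using assms(4) c(2) by auto
  have n: "2 \<le> n" "distinct c" "set c \<subseteq> V"
    using c(1) len by (auto simp: is_cycle_def)
  let ?d = "path_dist V E"
  have "n \<le> ?d (c ! 0) (c ! n)"
    by (rule shortest_cycle_antipodal_dist[OF assms(1) c(1) shortest len])
  moreover have "n \<le> ?d (c ! 1) (c ! Suc n)"
    using shortest_cycle_antipodal_dist[OF assms(1) is_cycle_rotate1[OF c(1)]] shortest len n(1)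
    by (simp add: nth_rotate1)
  moreover have "?d (c ! 0) (c ! 1) \<le> 1" "?d (c ! 1) (c ! n) \<le> n - 1"
    "?d (c ! n) (c ! Suc n) \<le> 1" "?d (c ! Suc n) (c ! 0) \<le> n - 1"
    using path_dist_along_cycle[OF c(1), of 0 1] path_dist_along_cycle[OF c(1), of 1 n]
      path_dist_along_cycle[OF c(1), of n "Suc n"] path_dist_along_cycle[OF c(1), of "Suc n" "2 * n"]
      len n(1) by simp_all
  moreover have "distinct [c ! 0, c ! 1, c ! n, c ! Suc n]"
    using n len by (auto simp: nth_eq_iff_index_eq)
  ultimately show ?thesis
    using n len
    by (intro not_cond_strict_neg_def_four_points)
       (auto intro: nth_mem simp: path_dist_self path_dist_sym[OF assms(1), of x y for x y])
qed

end
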